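(* Let $\mathcal{H} = \bigotimes_{i=1}^n \mathcal{H}_i$, $H \in \mathrm{Herm}(\mathcal{H})$, $\mathcal{A}$ an ancillary Hilbert space and $H' \in \mathrm{Herm}(\mathcal{H}\otimes\mathcal{A})$. If $(H',\mathcal{A})$ is an $(\eta,\epsilon)$-gadget for $H$, then $(H',\mathcal{A})$ satisfies the $(\zeta,\epsilon)$-gadget property for $H$ with $\zeta = O(\eta)$.
   Context: $\|\cdot\|$ denotes the operator norm, $\mathrm{Proj}(\cdot)$ the set of orthogonal projectors and $\mathrm{U}(\cdot)$ the unitary group. $(H',\mathcal{A})$ is an $(\eta,\epsilon)$-gadget for $H$ if there exist $P \in \mathrm{Proj}(\mathcal{A})\setminus\{0\}$ and $U \in \mathrm{U}(\mathcal{H}\otimes\mathcal{A})$ with $\|U - \mathbb{I}\| \le \eta$ and $\|P'H'P' - U(H\otimes P)U^\dagger\| \le \epsilon$, where $P' = U(\mathbb{I}\otimes P)U^\dagger$. $(H',\mathcal{A})$ satisfies the $(\zeta,\epsilon)$-gadget property for $H$ if there exist $P' \in \mathrm{Proj}(\mathcal{H}\otimes\mathcal{A})$ and $\tilde P \in \mathrm{Proj}(\mathcal{A})\setminus\{0\}$ such that for every $H_{\mathrm{else}} \in \mathrm{Herm}(\mathcal{H})$ there is a unitary $\tilde U_{H_{\mathrm{else}}} \in \mathrm{U}(\mathcal{H}\otimes\mathcal{A})$ with $\|P'(H' + H_{\mathrm{else}}\otimes\mathbb{I})P' - \tilde U_{H_{\mathrm{else}}}((H+H_{\mathrm{else}})\otimes\tilde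 P)\tilde U_{H_{\mathrm{else}}}^\dagger\| \le \epsilon + \zeta\|H_{\mathrm{else}}\|$. *)

theory Defs
  imports "HOL-Analysis.Analysis"
begin

text \<open>Finite-dimensional Hilbert spaces are modelled as complex^'i for a finite
basis index type 'i; operators are square complex matrices complex^'i^'i.
The system space H has basis 'h, the ancilla A has basis 'a, and the tensor
product H \<otimes> A has basis 'h \<times> 'a.\<close>

definition cadj :: "complex^'n^'m \<Rightarrow> complex^'m^'n" where
  "cadj A = (\<chi> i j. cnj (A $ j $ i))"

definition hermitian :: "complex^'n^'n \<Rightarrow> bool" where
  "hermitian A \<longleftrightarrow> cadj A = A"

definition unitary :: "complex^'n^'n \<Rightarrow> bool" where
  "unitary U \<longleftrightarrow> U ** cadj U = mat 1 \<and> cadj U ** U = mat 1"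

definition projector :: "complex^'n^'n \<Rightarrow> bool" where
  "projector P \<longleftrightarrow> hermitian P \<and> P ** P = P"

definition opnorm :: "complex^'n^'m \<Rightarrow> real" where
  "opnorm A = onorm (\<lambda>x. A *v x)"

definition kron :: "complex^'h::finite^'h \<Rightarrow> complex^'a::finite^'a \<Rightarrow> complex^('h \<times> 'a)^('h \<times> 'a)" where
  "kron A B = (\<chi> p q. A $ fst p $ fst q * B $ snd p $ snd q)"

definition is_gadget ::
  "real \<Rightarrow> real \<Rightarrow> complex^'h::finite^'h \<Rightarrow> complex^('h \<times> 'a::finite)^('h \<times> 'a) \<Rightarrow> bool" where
  "is_gadget \<eta> \<epsilon> H H' \<longleftrightarrow>
     (\<exists>(P::complex^'a^'a) U. projector P \<and> P \<noteq> 0 \<and> unitary U \<and>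
        opnorm (U - mat 1) \<le> \<eta> \<and>
        (let P' = U ** kron (mat 1) P ** cadj U in
           opnorm (P' ** H' ** P' - U ** kron H P ** cadj U) \<le> \<epsilon>))"

definition gadget_property ::
  "real \<Rightarrow> real \<Rightarrow> complex^'h::finite^'h \<Rightarrow> complex^('h \<times> 'a::finite)^('h \<times> 'a) \<Rightarrow> bool" where
  "gadget_property \<zeta> \<epsilon> H H' \<longleftrightarrow>
     (\<exists>P' (Pt::complex^'a^'a). projector P' \<and> projector Pt \<and> Pt \<noteq> 0 \<and>
        (\<forall>Helse::complex^'h^'h. hermitian Helse \<longrightarrow>
           (\<exists>Ut. unitary Ut \<and>
              opnorm (P' ** (H' + kron Helse (mat 1)) ** P'
                      - Ut ** kron (H + Helse) Pt ** cadj Ut)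
                \<le> \<epsilon> + \<zeta> * opnorm Helse)))"

end

theory Submission
  imports Defs
begin

text \<open>The witnesses are \<open>P' = U (I \<otimes> P) U\<^sup>\<dagger>\<close>, \<open>P\<^sup>~ = P\<close> and \<open>U\<^sup>~ = U\<close>, independently of
\<open>H\<^sub>e\<^sub>l\<^sub>s\<^sub>e\<close>. For \<open>X = H\<^sub>e\<^sub>l\<^sub>s\<^sub>e \<otimes> I\<close> one has \<open>P' (U X U\<^sup>\<dagger>) P' = U (H\<^sub>e\<^sub>l\<^sub>s\<^sub>e \<otimes> P) U\<^sup>\<dagger>\<close>,
so the error for \<open>H' + X\<close> is the gadget error plus \<open>P' (X - U X U\<^sup>\<dagger>) P'\<close>. As \<open>U\<close> is
\<open>\<eta>\<close>-close to the identity, \<open>X - U X U\<^sup>\<dagger> = (X (U - I) - (U - I) X) U\<^sup>\<dagger>\<close> has norm at most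
\<open>2 \<eta> \<parallel>X\<parallel> \<le> 2 \<eta> \<parallel>H\<^sub>e\<^sub>l\<^sub>s\<^sub>e\<parallel>\<close>, and compressing by the projector \<open>P'\<close> does not increase the
norm.\<close>

lemma opnorm_nonneg: "0 \<le> opnorm A"
  unfolding opnorm_def by (rule onorm_pos_le) simp

lemma norm_matrix_vector_mult_le: "norm (A *v x) \<le> opnorm A * norm (x::complex^'n::finite)"
  unfolding opnorm_def by (rule onorm) simp

lemma opnorm_le: "(\<And>x. norm (A *v x) \<le> b * norm (x::complex^'n::finite)) \<Longrightarrow> opnorm A \<le> b"
  unfolding opnorm_def by (rule onorm_le)

lemma opnorm_matrix_mult_le:
  "opnorm ((A::complex^'n::finite^'m::finite) ** (B::complex^'k::finite^'n)) \<le> opnorm A * opnorm B"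
proof -
  have "(\<lambda>x. (A ** B) *v x) = (\<lambda>x. A *v x) \<circ> (\<lambda>x. B *v x)"
    by (simp add: fun_eq_iff matrix_vector_mul_assoc)
  then show ?thesis
    unfolding opnorm_def by (simp add: onorm_compose)
qed

lemma opnorm_add_le: "opnorm ((A::complex^'n::finite^'m::finite) + B) \<le> opnorm A + opnorm B"
  unfolding opnorm_def matrix_vector_mult_add_rdistrib by (rule onorm_triangle) simp_all

lemma opnorm_diff_le: "opnorm ((A::complex^'n::finite^'m::finite) - B) \<le> opnorm A + opnorm B"
proof -
  have "(\<lambda>x. (- B) *v x) = (\<lambda>x. - (B *v x))"
    by (simp add: fun_eq_iff vec_eq_iff matrix_vector_mult_def sum_negf)
  then have "opnorm (- B) = opnorm B"
    unfolding opnorm_def by (simp add: onorm_neg)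
  then show ?thesis
    using opnorm_add_le[of A "- B"] by simp
qed

lemma inner_complex_cnj: "inner (z::complex) w = Re (cnj z * w)"
  by (simp add: inner_complex_def)

lemma inner_matrix_vector_mult_cadj:
  "inner ((A::complex^'n::finite^'m::finite) *v x) y = inner x (cadj A *v y)"
proof -
  have "inner (A *v x) y = Re (\<Sum>i\<in>UNIV. \<Sum>j\<in>UNIV. cnj (A$i$j) * cnj (x$j) * y$i)"
    by (simp add: inner_vec_def inner_complex_cnj matrix_vector_mult_def Re_sum sum_distrib_right)
  also have "\<dots> = Re (\<Sum>j\<in>UNIV. \<Sum>i\<in>UNIV. cnj (A$i$j) * cnj (x$j) * y$i)"
    by (subst sum.swap) (rule refl)
  also have "\<dots> = inner x (cadj A *v y)"
    by (simp add: inner_vec_def inner_complex_cnj matrix_vector_mult_def cadj_def Re_sum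
        sum_distrib_left mult_ac)
  finally show ?thesis .
qed

lemma cadj_cadj [simp]: "cadj (cadj A) = A"
  by (simp add: cadj_def vec_eq_iff)

lemma cadj_matrix_mult:
  "cadj ((A::complex^'n::finite^'m::finite) ** (B::complex^'k::finite^'n)) = cadj B ** cadj A"
  by (simp add: cadj_def matrix_matrix_mult_def vec_eq_iff mult.commute)

lemma unitary_cadj: "unitary U \<Longrightarrow> unitary (cadj U)"
  by (auto simp: unitary_def)

lemma norm_unitary_mult: "unitary U \<Longrightarrow> norm (U *v x) = norm x"
proof -
  assume "unitary U"
  then have "inner (U *v x) (U *v x) = inner x x"
    by (simp add: inner_matrix_vector_mult_cadj matrix_vector_mul_assoc unitary_def)
  then show ?thesis
    by (simp add: norm_eq_sqrt_inner)
qed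

lemma opnorm_unitary_le: "unitary U \<Longrightarrow> opnorm U \<le> 1"
  by (rule opnorm_le) (simp add: norm_unitary_mult)

lemma opnorm_projector_le: "projector P \<Longrightarrow> opnorm P \<le> 1"
proof (rule opnorm_le)
  fix x
  assume "projector P"
  then have "(norm (P *v x))\<^sup>2 = inner x (P *v x)"
    by (simp add: power2_norm_eq_inner inner_matrix_vector_mult_cadj matrix_vector_mul_assoc
        projector_def hermitian_def)
  also have "\<dots> \<le> norm x * norm (P *v x)"
    by (rule norm_cauchy_schwarz)
  finally have "norm (P *v x) * norm (P *v x) \<le> norm x * norm (P *v x)"
    by (simp add: power2_eq_square)
  then show "norm (P *v x) \<le> 1 * norm x"
    by (metis mult_right_le_imp_le norm_ge_zero order_le_less mult_1)
qed

lemma cadj_mat1 [simp]: "cadj (mat 1 :: complex^'n::finite^'n) = mat 1"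
  by (simp add: cadj_def mat_def vec_eq_iff)

lemma cadj_kron: "cadj (kron A B) = kron (cadj A) (cadj B)"
  by (simp add: kron_def cadj_def vec_eq_iff)

lemma kron_mult: "kron A B ** kron C D = kron (A ** C) (B ** D)"
proof -
  have "(\<Sum>r\<in>UNIV. A $ fst p $ fst r * B $ snd p $ snd r * (C $ fst r $ fst q * D $ snd r $ snd q)) =
        (\<Sum>r\<in>UNIV. A $ fst p $ r * C $ r $ fst q) * (\<Sum>s\<in>UNIV. B $ snd p $ s * D $ s $ snd q)"
    for p q :: "'a::finite \<times> 'b::finite"
    by (simp add: sum_product sum.cartesian_product case_prod_unfold mult_ac)
  then show ?thesis
    by (simp add: kron_def matrix_matrix_mult_def vec_eq_iff)
qed

lemma kron_add_left: "kron (A + B) C = kron A C + kron B C"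
  by (simp add: kron_def vec_eq_iff distrib_right)

lemma projector_mat1_kron: "projector P \<Longrightarrow> projector (kron (mat 1) P)"
  by (simp add: projector_def hermitian_def cadj_kron kron_mult)

lemma opnorm_kron_mat1_le:
  "opnorm (kron (A::complex^'h::finite^'h) (mat 1 :: complex^'a::finite^'a)) \<le> opnorm A"
proof (rule opnorm_le)
  fix x :: "complex^('h \<times> 'a)"
  define slice where "slice y b = (\<chi> h. y $ (h, b))" for y :: "complex^('h \<times> 'a)" and b
  have kron_slice: "slice (kron A (mat 1) *v x) b = A *v slice x b" for b
  proof -
    have "(kron A (mat 1) *v x) $ (h, b) =
          (\<Sum>r\<in>UNIV. \<Sum>s\<in>UNIV. A $ h $ r * (if b = s then 1 else 0) * x $ (r, s))" for h
      by (simp add: kron_def matrix_vector_mult_def mat_def sum.cartesian_product case_prod_unfold)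
    then show ?thesis
      by (simp add: slice_def matrix_vector_mult_def vec_eq_iff if_distrib if_distribR cong: if_cong)
  qed
  have norm_slices: "(norm y)\<^sup>2 = (\<Sum>b\<in>UNIV. (norm (slice y b))\<^sup>2)" for y
  proof -
    have "(norm y)\<^sup>2 = (\<Sum>h\<in>UNIV. \<Sum>b\<in>UNIV. (norm (y $ (h, b)))\<^sup>2)"
      by (simp add: power2_norm_eq_inner inner_vec_def sum.cartesian_product flip: UNIV_Times_UNIV)
    also have "\<dots> = (\<Sum>b\<in>UNIV. \<Sum>h\<in>UNIV. (norm (y $ (h, b)))\<^sup>2)"
      by (rule sum.swap)
    finally show ?thesis
      by (simp add: slice_def power2_norm_eq_inner inner_vec_def)
  qed
  have "(norm (kron A (mat 1) *v x))\<^sup>2 = (\<Sum>b\<in>UNIV. (norm (A *v slice x b))\<^sup>2)"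
    by (simp add: norm_slices kron_slice)
  also have "\<dots> \<le> (\<Sum>b\<in>UNIV. (opnorm A * norm (slice x b))\<^sup>2)"
    by (intro sum_mono power_mono norm_matrix_vector_mult_le norm_ge_zero)
  also have "\<dots> = (opnorm A * norm x)\<^sup>2"
    by (simp add: power_mult_distrib norm_slices[of x] sum_distrib_left)
  finally show "norm (kron A (mat 1) *v x) \<le> opnorm A * norm x"
    using opnorm_nonneg[of A] by (simp add: power2_le_iff_abs_le)
qed

lemma matrix_add_rdistrib: "((A::'a::semiring_1^'n^'m) + B) ** C = A ** C + B ** C"
  by (simp add: matrix_matrix_mult_def vec_eq_iff distrib_right sum.distrib)

lemma matrix_diff_rdistrib: "((A::'a::ring_1^'n^'m) - B) ** C = A ** C - B ** C"
  by (simp add: matrix_matrix_mult_def vec_eq_iff left_diff_distrib sum_subtractf)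

lemma matrix_diff_ldistrib: "(A::'a::ring_1^'n^'m) ** (B - C) = A ** B - A ** C"
  by (simp add: matrix_matrix_mult_def vec_eq_iff right_diff_distrib sum_subtractf)

lemma matrix_mult_cadj_unitary_cancel: "unitary U \<Longrightarrow> A ** cadj U ** U = A"
  by (simp add: unitary_def flip: matrix_mul_assoc)

lemma projector_unitary_conj:
  assumes "projector P" and "unitary U"
  shows "projector (U ** P ** cadj U)"
proof -
  have "(U ** P ** cadj U) ** (U ** P ** cadj U) = U ** (P ** P) ** cadj U"
    using assms(2) by (simp add: matrix_mul_assoc matrix_mult_cadj_unitary_cancel)
  with assms(1) show ?thesis
    by (simp add: projector_def hermitian_def cadj_matrix_mult matrix_mul_assoc)
qed

lemma opnorm_compress_le: "opnorm P \<le> 1 \<Longrightarrow> opnorm (P ** A ** P) \<le> opnorm A"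
proof -
  assume P: "opnorm P \<le> 1"
  have "opnorm (P ** A ** P) \<le> opnorm (P ** A) * opnorm P"
    by (rule opnorm_matrix_mult_le)
  also have "\<dots> \<le> opnorm (P ** A)"
    by (rule mult_left_le[OF P opnorm_nonneg])
  also have "\<dots> \<le> opnorm P * opnorm A"
    by (rule opnorm_matrix_mult_le)
  also have "\<dots> \<le> opnorm A"
    by (rule mult_left_le_one_le[OF opnorm_nonneg opnorm_nonneg P])
  finally show ?thesis .
qed

lemma opnorm_unitary_conj_diff_le:
  assumes "unitary U"
  shows "opnorm (X - U ** X ** cadj U) \<le> 2 * opnorm (U - mat 1) * opnorm X"
proof -
  define D where "D = U - mat 1"
  have "X - U ** X ** cadj U = (X ** D - D ** X) ** cadj U"
    using assms by (simp add: D_def matrix_diff_ldistrib matrix_diff_rdistrib unitary_def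
        flip: matrix_mul_assoc)
  also have "opnorm \<dots> \<le> opnorm (X ** D - D ** X) * opnorm (cadj U)"
    by (rule opnorm_matrix_mult_le)
  also have "\<dots> \<le> opnorm (X ** D - D ** X)"
    by (rule mult_left_le[OF opnorm_unitary_le[OF unitary_cadj[OF assms]] opnorm_nonneg])
  also have "\<dots> \<le> opnorm X * opnorm D + opnorm D * opnorm X"
    by (intro order_trans[OF opnorm_diff_le] add_mono opnorm_matrix_mult_le)
  finally show ?thesis by (simp add: D_def mult_ac)
qed

lemma opnorm_compress_unitary_conj_diff_le:
  assumes "projector P" and "unitary U"
  shows "opnorm (P ** (X - U ** X ** cadj U) ** P) \<le> 2 * opnorm (U - mat 1) * opnorm X"
  using opnorm_compress_le[OF opnorm_projector_le[OF assms(1)]]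
    opnorm_unitary_conj_diff_le[OF assms(2)]
  by (rule order_trans)

lemma gadget_error_decomposition:
  fixes U :: "complex^('h::finite \<times> 'a::finite)^('h \<times> 'a)" and P :: "complex^'a^'a"
  defines "P' \<equiv> U ** kron (mat 1) P ** cadj U"
  assumes "unitary U" and "P ** P = P"
  shows "P' ** (H' + kron E (mat 1)) ** P' - U ** kron (H + E) P ** cadj U =
           (P' ** H' ** P' - U ** kron H P ** cadj U)
         + P' ** (kron E (mat 1) - U ** kron E (mat 1) ** cadj U) ** P'"
proof -
  have "P' ** (U ** kron E (mat 1) ** cadj U) ** P' =
        U ** (kron (mat 1) P ** kron E (mat 1) ** kron (mat 1) P) ** cadj U"
    using assms(2) by (simp add: P'_def matrix_mul_assoc matrix_mult_cadj_unitary_cancel)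
  also have "\<dots> = U ** kron E P ** cadj U"
    using assms(3) by (simp add: kron_mult)
  finally show ?thesis
    by (simp add: matrix_add_ldistrib matrix_add_rdistrib matrix_diff_ldistrib
        matrix_diff_rdistrib kron_add_left)
qed

theorem theorem3p1:
  fixes H :: "complex^'h::finite^'h" and H' :: "complex^('h \<times> 'a::finite)^('h \<times> 'a)"
    and \<eta> \<epsilon> :: real
  assumes "hermitian H" and "hermitian H'"
    and "is_gadget \<eta> \<epsilon> H H'"
  shows "gadget_property (2 * \<eta>) \<epsilon> H H'"
proof -
  obtain P :: "complex^'a^'a" and U where P: "projector P" "P \<noteq> 0" and U: "unitary U"
    and close: "opnorm (U - mat 1) \<le> \<eta>"
    and err: "opnorm ((U ** kron (mat 1) P ** cadj U) ** H' ** (U ** kron (mat 1) P ** cadj U)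
                 - U ** kron H P ** cadj U) \<le> \<epsilon>"
    using assms(3) unfolding is_gadget_def Let_def by blast
  have eta: "0 \<le> \<eta>"
    using close opnorm_nonneg order_trans by blast
  define P' where "P' = U ** kron (mat 1) P ** cadj U"
  have P': "projector P'"
    unfolding P'_def by (intro projector_unitary_conj projector_mat1_kron P U)
  have "opnorm (P' ** (H' + kron E (mat 1)) ** P' - U ** kron (H + E) P ** cadj U)
          \<le> \<epsilon> + 2 * \<eta> * opnorm E" for E
  proof -
    let ?X = "kron E (mat 1) :: complex^('h \<times> 'a)^('h \<times> 'a)"
    have "opnorm (P' ** (?X - U ** ?X ** cadj U) ** P') \<le> 2 * opnorm (U - mat 1) * opnorm ?X"
      by (rule opnorm_compress_unitary_conj_diff_le[OF P' U])
    also have "\<dots> \<le> 2 * \<eta> * opnorm E"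
      using close opnorm_kron_mat1_le[of E] eta by (intro mult_mono) (auto simp: opnorm_nonneg)
    finally show ?thesis
      using gadget_error_decomposition[OF U, of P H' E H] P err
      by (auto simp: P'_def projector_def intro: order_trans[OF opnorm_add_le] add_mono)
  qed
  then show ?thesis
    unfolding gadget_property_def using P P' U by blast
qed

end
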